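(* Assume the setting in the context. Suppose that $B\cap\partial A=\overline{B_A^o\cap\partial A}\neq\emptyset$ and $f|_A$ is continuous on $A$. Then for any $\alpha>f_1$, $\liminf_{r\downarrow0}r^{d-1}\nu(B,r,\alpha\theta_dr^d/2)>0$.
   Context: Let $2\le d\le m$. $\mathcal M\subset\mathbb R^m$ is a $d$-dimensional $C^2$ submanifold of $\mathbb R^m$, closed in $\mathbb R^m$, with induced Riemannian metric; ${\rm dist}$ geodetic distance, $B(x,r):=\{y\in\mathcal M:{\rm dist}(x,y)\le r\}$, $v$ Riemannian volume. For $D\subset\mathcal M$: $D^o:=\mathcal M\setminus\overline{\mathcal M\setminus D}$, $\partial D:=\overline D\setminus D^o$. $A\subset\mathcal M$ is a compact $C^2$ submanifold-with-boundary of $\mathcal M$ (for each $y\in\partial A$ there is a chart $(U,g)$ of $\mathcal M$ with $0\in U$, $g(0)=y$, $g(U\cap\mathbb H)=g(U)\cap A$, $\mathbb H=\mathbb R^{d-1}\times[0,\infty)$). $B\subset A$ is closed and $B_A^o:=B\setminus\overline{A\setminus B}$. $f$ is a probability density w.r.t. $v$ vanishing outside $A$, $\mu$ the measure with density $f$, $f_1:=\inf_{x\in B\cap\partial A}f(x)$. $\theta_d:=\pi^{d/2}/\Gamma(1+d/2)$. For $D\subset\mathcal M$, $r>0$, $a>0$, the packing number $\nu(D,r,a)$ is the largest $m$ such that there exist $m$ pairwise disjoint closed geodetic balls $B(x_i,r)$ with centres $x_i\in D$, each with $\mu(B(x_i,r))\le a$. *)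

theory Defs
  imports "HOL-Analysis.Analysis"
begin

definition C2_on :: "('a::euclidean_space \<Rightarrow> 'b::euclidean_space) \<Rightarrow> 'a set \<Rightarrow> bool" where
  "C2_on g U \<longleftrightarrow> (\<exists>g' :: 'a \<Rightarrow> ('a \<Rightarrow>\<^sub>L 'b). \<exists>g'' :: 'a \<Rightarrow> ('a \<Rightarrow>\<^sub>L ('a \<Rightarrow>\<^sub>L 'b)).
      (\<forall>x\<in>U. (g has_derivative blinfun_apply (g' x)) (at x)) \<and>
      (\<forall>x\<in>U. (g' has_derivative blinfun_apply (g'' x)) (at x)) \<and>
      continuous_on U g'')"

definition chart :: "(real^'m) set \<Rightarrow> (real^'d) set \<Rightarrow> (real^'d \<Rightarrow> real^'m) \<Rightarrow> bool" where
  "chart M U g \<longleftrightarrow> open U \<and> C2_on g U \<and>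
     (\<forall>x\<in>U. \<forall>g'. (g has_derivative g') (at x) \<longrightarrow> inj g') \<and>
     g ` U \<subseteq> M \<and> openin (top_of_set M) (g ` U) \<and>
     inj_on g U \<and> continuous_on (g ` U) (inv_into U g)"

definition closed_C2_submanifold :: "(real^'m) set \<Rightarrow> ('d::finite) itself \<Rightarrow> bool" where
  "closed_C2_submanifold M (_::('d::finite) itself) \<longleftrightarrow> closed M \<and>
     (\<forall>y\<in>M. \<exists>(U::(real^'d) set) g. chart M U g \<and> y \<in> g ` U)"

definition man_interior :: "'a::topological_space set \<Rightarrow> 'a set \<Rightarrow> 'a set" where
  "man_interior M D = M - closure (M - D)"

definition man_boundary :: "'a::topological_space set \<Rightarrow> 'a set \<Rightarrow> 'a set" where
  "man_boundary M D = closure D - man_interior M D"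

text \<open>A is a compact C^2 submanifold-with-boundary of M (half space H = {x. 0 \<le> x$k},
for some coordinate k, i.e. R^{d-1} x [0,\<infinity>) up to a permutation of coordinates).\<close>
definition compact_C2_submanifold_with_boundary ::
    "(real^'m) set \<Rightarrow> ('d::finite) itself \<Rightarrow> (real^'m) set \<Rightarrow> bool" where
  "compact_C2_submanifold_with_boundary M (_::('d::finite) itself) A \<longleftrightarrow> compact A \<and> A \<subseteq> M \<and>
     (\<forall>y\<in>man_boundary M A. \<exists>(U::(real^'d) set) g k. chart M U g \<and> 0 \<in> U \<and> g 0 = y \<and>
        g ` (U \<inter> {x. 0 \<le> x $ k}) = g ` U \<inter> A)"

definition curve_length :: "(real \<Rightarrow> 'a::metric_space) \<Rightarrow> ennreal" where
  "curve_length \<gamma> = (SUP (n, t) \<in> {(n, t::nat \<Rightarrow> real). t 0 = 0 \<and> t n = 1 \<and>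
        (\<forall>i<n. t i \<le> t (Suc i))}.
      (\<Sum>i<n. ennreal (dist (\<gamma> (t i)) (\<gamma> (t (Suc i))))))"

text \<open>Geodesic distance on M (induced Riemannian metric): infimum of lengths of curves in M.\<close>
definition gdist :: "'a::real_normed_vector set \<Rightarrow> 'a \<Rightarrow> 'a \<Rightarrow> ennreal" where
  "gdist M x y = (INF \<gamma> \<in> {\<gamma>. path \<gamma> \<and> path_image \<gamma> \<subseteq> M \<and> pathstart \<gamma> = x \<and> pathfinish \<gamma> = y}.
       curve_length \<gamma>)"

definition gball :: "'a::real_normed_vector set \<Rightarrow> 'a \<Rightarrow> real \<Rightarrow> 'a set" where
  "gball M x r = {y\<in>M. gdist M x y \<le> ennreal r}"

definition riemannian_volume :: "(real^'m) set \<Rightarrow> ('d::finite) itself \<Rightarrow> (real^'m) measure \<Rightarrow> bool" where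
  "riemannian_volume M (_::('d::finite) itself) v \<longleftrightarrow> sets v = sets borel \<and> emeasure v (UNIV - M) = 0 \<and>
     (\<forall>(U::(real^'d) set) g g'. chart M U g \<longrightarrow> (\<forall>x\<in>U. (g has_derivative g' x) (at x)) \<longrightarrow>
        (\<forall>E \<in> sets lborel. E \<subseteq> U \<longrightarrow>
           emeasure v (g ` E) =
             (\<integral>\<^sup>+ x\<in>E. ennreal (sqrt (det (transpose (matrix (g' x)) ** matrix (g' x)))) \<partial>lborel)))"

definition mu :: "(real^'m) measure \<Rightarrow> (real^'m \<Rightarrow> real) \<Rightarrow> (real^'m) set \<Rightarrow> ennreal" where
  "mu v f S = (\<integral>\<^sup>+ y\<in>S. ennreal (f y) \<partial>v)"

definition packing_number :: "(real^'m) set \<Rightarrow> (real^'m) measure \<Rightarrow> (real^'m \<Rightarrow> real) \<Rightarrow>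
    (real^'m) set \<Rightarrow> real \<Rightarrow> real \<Rightarrow> enat" where
  "packing_number M v f D r a = (SUP S \<in> {S. finite S \<and> S \<subseteq> D \<and>
       (\<forall>x\<in>S. \<forall>y\<in>S. x \<noteq> y \<longrightarrow> gball M x r \<inter> gball M y r = {}) \<and>
       (\<forall>x\<in>S. mu v f (gball M x r) \<le> ennreal a)}. enat (card S))"

definition theta :: "nat \<Rightarrow> real" where
  "theta d = pi powr (real d / 2) / Gamma (1 + real d / 2)"

end

theory Submission
  imports Defs
begin

(* Choose x0 in B_A^o \<inter> \<partial>A with f(x0) < \<alpha>; near x0 the set A lies inside B and f stays
   below some \<alpha>' < \<alpha>. A boundary chart at x0, precomposed with a linear map so that its
   differential at 0 is an isometry, turns A into a half space {a \<bullet> u \<ge> 0} and distorts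
   distances and volumes by factors arbitrarily close to 1 on a small ball. A geodesic ball of
   radius r centred at the image of a point of the hyperplane a \<bullet> u = 0 therefore meets A in
   at most (1 + o(1)) times half a Euclidean r-ball, so its \<mu>-mass is below \<alpha> \<theta>_d r^d / 2.
   A grid of mesh ~ r on a fixed (d-1)-dimensional disc of the hyperplane gives ~ r^(1-d) such
   centres whose balls are pairwise disjoint. *)

section \<open>Geodesic balls and packing numbers\<close>

lemma ennreal_dist_le_gdist: "ennreal (dist x y) \<le> gdist M x y"
  unfolding gdist_def
proof (rule INF_greatest)
  fix \<gamma> :: "real \<Rightarrow> 'a"
  assume "\<gamma> \<in> {\<gamma>. path \<gamma> \<and> path_image \<gamma> \<subseteq> M \<and> pathstart \<gamma> = x \<and> pathfinish \<gamma> = y}"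
  then have ends: "\<gamma> 0 = x" "\<gamma> 1 = y" by (auto simp: pathstart_def pathfinish_def)
  let ?t = "\<lambda>i::nat. if i = 0 then 0 else (1::real)"
  have "(\<Sum>i<1::nat. ennreal (dist (\<gamma> (?t i)) (\<gamma> (?t (Suc i))))) \<le> curve_length \<gamma>"
    unfolding curve_length_def by (rule SUP_upper2[where i="(1, ?t)"]) auto
  then show "ennreal (dist x y) \<le> curve_length \<gamma>" using ends by simp
qed

lemma gball_subset_cball:
  assumes "0 \<le> r"
  shows "gball M x r \<subseteq> M \<inter> cball x r"
proof
  fix y assume y: "y \<in> gball M x r"
  then have "ennreal (dist x y) \<le> ennreal r"
    using ennreal_dist_le_gdist[of x y M] by (auto simp: gball_def)
  then show "y \<in> M \<inter> cball x r" using y assms by (simp add: gball_def)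
qed

lemma gball_disjointI:
  assumes "0 \<le> r" and "2 * r < dist x y"
  shows "gball M x r \<inter> gball M y r = {}"
proof (rule ccontr)
  assume "gball M x r \<inter> gball M y r \<noteq> {}"
  then obtain z where "z \<in> gball M x r" "z \<in> gball M y r" by blast
  then have "dist x z \<le> r" "dist y z \<le> r"
    using gball_subset_cball[OF assms(1), of M] by (auto simp: subset_iff)
  then show False using assms(2) dist_triangle3[of x y z] by (simp add: dist_commute)
qed

lemma packing_number_ge_card:
  assumes "finite S" "S \<subseteq> D" "\<forall>x\<in>S. \<forall>y\<in>S. x \<noteq> y \<longrightarrow> gball M x r \<inter> gball M y r = {}"
    "\<forall>x\<in>S. mu v f (gball M x r) \<le> ennreal a"
  shows "enat (card S) \<le> packing_number M v f D r a"
  unfolding packing_number_def by (rule SUP_upper) (use assms in auto)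

lemma packing_number_ge_separated_image:
  assumes "finite W" and "0 \<le> r" and "\<forall>w\<in>W. g w \<in> D" and "\<forall>w\<in>W. mu v f (gball M (g w) r) \<le> ennreal b"
    and sep: "\<forall>w\<in>W. \<forall>w'\<in>W. w \<noteq> w' \<longrightarrow> 2 * r < dist (g w) (g w')"
  shows "enat (card W) \<le> packing_number M v f D r b"
proof -
  have "inj_on g W"
  proof (rule inj_onI, rule ccontr)
    fix w w' assume "w \<in> W" "w' \<in> W" "g w = g w'" "w \<noteq> w'"
    then show False using sep \<open>0 \<le> r\<close> by fastforce
  qed
  then have "card (g ` W) = card W" by (rule card_image)
  moreover have "enat (card (g ` W)) \<le> packing_number M v f D r b"
    using assms by (intro packing_number_ge_card) (auto intro!: gball_disjointI)
  ultimately show ?thesis by simp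
qed

lemma mu_le_cmult_emeasure:
  assumes "S \<inter> A \<subseteq> T" "T \<in> sets v" "\<forall>y\<in>S \<inter> A. f y \<le> c" "\<forall>y. y \<notin> A \<longrightarrow> f y = 0"
  shows "mu v f S \<le> ennreal c * emeasure v T"
proof -
  have "ennreal (f y) * indicator S y \<le> ennreal c * indicator T y" for y
    using assms(1,3,4) by (cases "y \<in> A"; cases "y \<in> S") (auto simp: indicator_def intro: ennreal_leI)
  then have "mu v f S \<le> (\<integral>\<^sup>+ y. ennreal c * indicator T y \<partial>v)"
    unfolding mu_def by (intro nn_integral_mono) auto
  also have "\<dots> = ennreal c * emeasure v T" using assms(2) by (rule nn_integral_cmult_indicator)
  finally show ?thesis .
qed

section \<open>Euclidean volume and the Gram determinant\<close>

lemma linear_injective_isometric_reparametrization: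
  fixes L :: "'a::euclidean_space \<Rightarrow> 'b::euclidean_space"
  assumes "linear L" and "inj L"
  obtains T S :: "'a \<Rightarrow> 'a"
  where "linear T" "linear S" "\<And>x. S (T x) = x" "\<And>x. T (S x) = x" "\<And>h. norm (L (T h)) = norm h"
proof -
  have dim_eq: "dim (UNIV :: 'a set) = dim (range L)"
    by (rule sym, rule dim_image_eq[OF assms(1)]) (simp add: assms(2))
  obtain f :: "'a \<Rightarrow> 'b" where f: "linear f" "range f = range L" "\<And>x. norm (f x) = norm x"
    by (rule isometry_subspaces[OF subspace_UNIV real_vector.linear_subspace_image[OF assms(1)] dim_eq]) auto
  obtain Li where "linear Li" and Li: "Li \<circ> L = id"
    using linear_injective_left_inverse[OF assms] by blast
  define T where "T = Li \<circ> f"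
  have LT: "L (T h) = f h" for h
  proof -
    obtain z where "f h = L z" using f(2) by (metis rangeE rangeI)
    then show ?thesis using fun_cong[OF Li, of z] by (simp add: T_def)
  qed
  have "linear T" unfolding T_def using \<open>linear Li\<close> f(1) by (simp add: linear_compose)
  moreover have "inj T"
  proof (rule injI)
    fix x y assume "T x = T y"
    then have "f x = f y" using LT by metis
    then have "norm (f (x - y)) = 0" using f(1) by (simp add: linear_diff)
    then show "x = y" using f(3) by simp
  qed
  ultimately obtain S where "linear S" "\<forall>x. S (T x) = x" "\<forall>x. T (S x) = x"
    using linear_injective_isomorphism by blast
  then show ?thesis using that[OF \<open>linear T\<close>] LT f(3) by simp
qed

lemma emeasure_half_cball:
  fixes a w :: "'a::euclidean_space"
  assumes "a \<noteq> 0" and "a \<bullet> w = 0" and "0 \<le> R"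
  shows "emeasure lborel (cball w R \<inter> {u. 0 \<le> a \<bullet> u}) = ennreal (unit_ball_vol DIM('a) * R ^ DIM('a) / 2)"
proof -
  define P where "P = cball w R \<inter> {u. 0 \<le> a \<bullet> u}"
  define N where "N = cball w R \<inter> {u. a \<bullet> u \<le> 0}"
  have P_meas: "P \<in> fmeasurable lborel" and N_meas: "N \<in> fmeasurable lborel"
    unfolding P_def N_def
    by (auto intro!: fmeasurable_compact compact_Int_closed closed_halfspace_ge closed_halfspace_le)
  have reflection: "distr lborel borel (\<lambda>u. 2 *\<^sub>R w + (-1) *\<^sub>R u) = (lborel :: 'a measure)"
    using lborel_affine[of "-1::real" "2 *\<^sub>R w"] by (simp add: density_1)
  have "emeasure lborel N = emeasure (distr lborel borel (\<lambda>u. 2 *\<^sub>R w + (-1) *\<^sub>R u)) N"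
    by (simp only: reflection)
  also have "\<dots> = emeasure lborel ((\<lambda>u. 2 *\<^sub>R w + (-1) *\<^sub>R u) -` N)"
    using N_meas by (subst emeasure_distr) auto
  also have "(\<lambda>u. 2 *\<^sub>R w + (-1) *\<^sub>R u) -` N = P"
  proof -
    have "dist w (2 *\<^sub>R w + (-1) *\<^sub>R u) = dist w u" for u
      by (simp add: dist_norm norm_minus_commute scaleR_2 algebra_simps)
    moreover have "a \<bullet> (2 *\<^sub>R w + (-1) *\<^sub>R u) = - (a \<bullet> u)" for u
      using assms(2) by (simp add: inner_diff_right)
    ultimately show ?thesis by (auto simp: P_def N_def)
  qed
  finally have "measure lborel N = measure lborel P" by (simp add: measure_def)
  moreover have "P \<inter> N \<subseteq> {u. a \<bullet> u = 0}" by (auto simp: P_def N_def)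
  then have "negligible (P \<inter> N)"
    using negligible_hyperplane[of a 0] assms(1) negligible_subset by auto
  then have "measure lebesgue (P \<inter> N) = 0" by (rule negligible_imp_measure0)
  then have "measure lborel (P \<inter> N) = 0" using P_meas N_meas by (simp add: measure_completion)
  moreover have "P \<union> N = cball w R" by (auto simp: P_def N_def)
  ultimately have "measure lborel P = unit_ball_vol DIM('a) * R ^ DIM('a) / 2"
    using measure_Un3[OF P_meas N_meas] content_cball[OF assms(3), of w] by simp
  moreover have "emeasure lborel P = ennreal (measure lborel P)"
    using P_meas by (simp add: emeasure_eq_measure2)
  ultimately have "emeasure lborel P = ennreal (unit_ball_vol DIM('a) * R ^ DIM('a) / 2)"
    by (simp only:)
  then show ?thesis by (simp only: P_def)
qed

definition gram_jacobian :: "(real^'n \<Rightarrow> real^'m) \<Rightarrow> real" where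
  "gram_jacobian L = sqrt (det (transpose (matrix L) ** matrix L))"

lemma gram_jacobian_isometry:
  assumes "linear L" and "\<And>h. norm (L h) = norm h"
  shows "gram_jacobian L = 1"
proof -
  have inner_eq: "L x \<bullet> L y = x \<bullet> y" for x y
    using assms(2)[of "x + y"] assms(2)[of x] assms(2)[of y]
    by (simp add: dot_norm linear_add[OF assms(1)])
  have "(transpose (matrix L) ** matrix L) $ i $ j = L (axis i 1) \<bullet> L (axis j 1)" for i j
    by (simp add: matrix_matrix_mult_def transpose_def matrix_def inner_vec_def)
  then have "transpose (matrix L) ** matrix L = mat 1"
    by (simp add: vec_eq_iff inner_eq inner_axis_axis mat_def)
  then show ?thesis by (simp add: gram_jacobian_def)
qed

lemma continuous_det:
  fixes Q :: "'a::t2_space \<Rightarrow> real^'n^'n"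
  assumes "\<And>i j. continuous F (\<lambda>u. Q u $ i $ j)"
  shows "continuous F (\<lambda>u. det (Q u))"
  unfolding det_def by (intro continuous_intros assms)

lemma isCont_gram_jacobian:
  fixes G' :: "'a::t2_space \<Rightarrow> ((real^'n) \<Rightarrow>\<^sub>L (real^'m))"
  assumes "isCont G' x0"
  shows "isCont (\<lambda>u. gram_jacobian (blinfun_apply (G' u))) x0"
proof -
  have "isCont (\<lambda>u. (transpose (matrix (blinfun_apply (G' u))) ** matrix (blinfun_apply (G' u))) $ i $ j) x0"
    for i j
    unfolding matrix_matrix_mult_def transpose_def matrix_def
    by (simp, intro continuous_intros assms)
  then show ?thesis
    unfolding gram_jacobian_def by (intro continuous_real_sqrt continuous_det)
qed

lemma emeasure_chart_image_le:
  fixes g :: "real^'d \<Rightarrow> real^'m"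
  assumes "riemannian_volume M TYPE('d) v" and "chart M U g"
    and "\<forall>x\<in>U. (g has_derivative g' x) (at x)"
    and "E \<in> sets lborel" "E \<subseteq> U" "\<forall>x\<in>E. gram_jacobian (g' x) \<le> C"
  shows "emeasure v (g ` E) \<le> ennreal C * emeasure lborel E"
proof -
  have "emeasure v (g ` E) = (\<integral>\<^sup>+ x\<in>E. ennreal (gram_jacobian (g' x)) \<partial>lborel)"
    using assms(1-5) unfolding riemannian_volume_def gram_jacobian_def by blast
  also have "\<dots> \<le> (\<integral>\<^sup>+ x. ennreal C * indicator E x \<partial>lborel)"
    using assms(6) by (intro nn_integral_mono) (auto simp: indicator_def intro: ennreal_leI)
  also have "\<dots> = ennreal C * emeasure lborel E" using assms(4) by (rule nn_integral_cmult_indicator)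
  finally show ?thesis .
qed

section \<open>Charts at boundary points\<close>

lemma C2_on_continuous_derivative:
  assumes "C2_on g U"
  obtains G' where "\<forall>x\<in>U. (g has_derivative blinfun_apply (G' x)) (at x)" "\<forall>x\<in>U. isCont G' x"
  using assms has_derivative_continuous unfolding C2_on_def by blast

lemma C2_on_compose_linear:
  fixes g :: "'a::euclidean_space \<Rightarrow> 'b::euclidean_space" and T :: "'c::euclidean_space \<Rightarrow> 'a"
  assumes "C2_on g U" and "linear T"
  shows "C2_on (g \<circ> T) (T -` U)"
proof -
  have bT: "bounded_linear T" using assms(2) linear_conv_bounded_linear by auto
  then have contT: "continuous_on UNIV T" by (rule linear_continuous_on)
  obtain G' :: "'a \<Rightarrow> ('a \<Rightarrow>\<^sub>L 'b)" and G'' where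
    d1: "\<forall>x\<in>U. (g has_derivative blinfun_apply (G' x)) (at x)" and
    d2: "\<forall>x\<in>U. (G' has_derivative blinfun_apply (G'' x)) (at x)" and
    cG: "continuous_on U G''"
    using assms(1) unfolding C2_on_def by blast
  define Tb where "Tb = Blinfun T"
  have Tb: "blinfun_apply Tb = T" using bT by (simp add: Tb_def bounded_linear_Blinfun_apply)
  define \<Phi> where "\<Phi> = (\<lambda>X::'a \<Rightarrow>\<^sub>L 'b. X o\<^sub>L Tb)"
  have b\<Phi>: "bounded_linear \<Phi>" unfolding \<Phi>_def
    by (rule bounded_bilinear.bounded_linear_left[OF bounded_bilinear_blinfun_compose])
  define \<Psi> where "\<Psi> = (\<lambda>Y::'a \<Rightarrow>\<^sub>L ('a \<Rightarrow>\<^sub>L 'b). Blinfun \<Phi> o\<^sub>L (Y o\<^sub>L Tb))"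
  have b\<Psi>: "bounded_linear \<Psi>" unfolding \<Psi>_def
    by (rule bounded_linear_compose[OF bounded_bilinear.bounded_linear_right[OF bounded_bilinear_blinfun_compose]
        bounded_bilinear.bounded_linear_left[OF bounded_bilinear_blinfun_compose]])
  \<comment> \<open>(g \<circ> T)' x = G' (T x) \<circ> T and (g \<circ> T)'' x h = G'' (T x) (T h) \<circ> T\<close>
  define H' where "H' = (\<lambda>x. \<Phi> (G' (T x)))"
  define H'' where "H'' = (\<lambda>x. \<Psi> (G'' (T x)))"
  have "((g \<circ> T) has_derivative blinfun_apply (H' x)) (at x)" if "x \<in> T -` U" for x
  proof -
    have "((g \<circ> T) has_derivative (blinfun_apply (G' (T x)) \<circ> T)) (at x)"
      by (rule diff_chain_at[OF bounded_linear_imp_has_derivative[OF bT]]) (use d1 that in auto)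
    moreover have "blinfun_apply (G' (T x)) \<circ> T = blinfun_apply (H' x)"
      by (auto simp: H'_def \<Phi>_def Tb)
    ultimately show ?thesis by simp
  qed
  moreover have "(H' has_derivative blinfun_apply (H'' x)) (at x)" if "x \<in> T -` U" for x
  proof -
    have "((G' \<circ> T) has_derivative (blinfun_apply (G'' (T x)) \<circ> T)) (at x)"
      by (rule diff_chain_at[OF bounded_linear_imp_has_derivative[OF bT]]) (use d2 that in auto)
    then have "((\<lambda>x. \<Phi> ((G' \<circ> T) x)) has_derivative (\<lambda>h. \<Phi> ((blinfun_apply (G'' (T x)) \<circ> T) h))) (at x)"
      by (rule bounded_linear.has_derivative[OF b\<Phi>])
    moreover have "(\<lambda>h. \<Phi> ((blinfun_apply (G'' (T x)) \<circ> T) h)) = blinfun_apply (H'' x)"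
      by (auto simp: H''_def \<Psi>_def Tb bounded_linear_Blinfun_apply[OF b\<Phi>])
    ultimately show ?thesis by (simp add: H'_def o_def)
  qed
  moreover have "continuous_on (T -` U) H''"
    unfolding H''_def
    by (rule continuous_on_compose2[OF linear_continuous_on[OF b\<Psi>]])
       (auto intro!: continuous_on_compose2[OF cG] continuous_on_subset[OF contT])
  ultimately show ?thesis unfolding C2_on_def by blast
qed

lemma chart_compose_linear_iso:
  fixes g :: "real^'d \<Rightarrow> real^'m" and T S :: "real^'d \<Rightarrow> real^'d"
  assumes ch: "chart M U g" and "linear T" "linear S"
    and ST: "\<And>x. S (T x) = x" and TS: "\<And>x. T (S x) = x"
  shows "chart M (T -` U) (g \<circ> T)"
proof -
  from ch have "open U" and "C2_on g U"
    and inj_deriv: "\<forall>x\<in>U. \<forall>g'. (g has_derivative g') (at x) \<longrightarrow> inj g'"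
    and "g ` U \<subseteq> M" and "openin (top_of_set M) (g ` U)"
    and inj: "inj_on g U" and inv_cont: "continuous_on (g ` U) (inv_into U g)"
    by (auto simp: chart_def)
  obtain G' :: "real^'d \<Rightarrow> ((real^'d) \<Rightarrow>\<^sub>L (real^'m))"
    where dG: "\<forall>x\<in>U. (g has_derivative blinfun_apply (G' x)) (at x)" and "\<forall>x\<in>U. isCont G' x"
    using \<open>C2_on g U\<close> by (rule C2_on_continuous_derivative)
  have "inj g'" if x: "x \<in> T -` U" and gd: "((g \<circ> T) has_derivative g') (at x)" for x g'
  proof -
    have "((g \<circ> T) has_derivative blinfun_apply (G' (T x)) \<circ> T) (at x)"
      using dG x by (intro diff_chain_at linear_imp_has_derivative \<open>linear T\<close>) auto
    then have "g' = blinfun_apply (G' (T x)) \<circ> T" using has_derivative_unique[OF gd] by blast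
    moreover have "inj (blinfun_apply (G' (T x)))" using inj_deriv dG x by auto
    moreover have "inj T" using ST by (metis injI)
    ultimately show ?thesis by (simp add: inj_compose)
  qed
  moreover have im: "(g \<circ> T) ` (T -` U) = g ` U"
    using TS by (metis image_comp surjI surj_image_vimage_eq)
  moreover have inj': "inj_on (g \<circ> T) (T -` U)"
    using inj ST by (auto simp: inj_on_def) (metis)
  moreover have "continuous_on ((g \<circ> T) ` (T -` U)) (inv_into (T -` U) (g \<circ> T))"
  proof -
    have "inv_into (T -` U) (g \<circ> T) y = S (inv_into U g y)" if "y \<in> g ` U" for y
    proof (rule inv_into_f_eq[OF inj'])
      show "S (inv_into U g y) \<in> T -` U" using that by (simp add: TS inv_into_into)
      show "(g \<circ> T) (S (inv_into U g y)) = y" using that by (simp add: TS f_inv_into_f)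
    qed
    moreover have "continuous_on UNIV S" using \<open>linear S\<close> by (simp add: linear_continuous_on linear_linear)
    ultimately show ?thesis
      unfolding im by (auto intro!: continuous_on_compose2[OF _ inv_cont] intro: continuous_on_cong[THEN iffD2])
  qed
  moreover have "open (T -` U)"
    using \<open>open U\<close> \<open>linear T\<close> by (simp add: open_vimage linear_continuous_on linear_linear)
  ultimately show ?thesis
    unfolding chart_def using C2_on_compose_linear[OF \<open>C2_on g U\<close> \<open>linear T\<close>] \<open>g ` U \<subseteq> M\<close>
      \<open>openin (top_of_set M) (g ` U)\<close> by auto
qed

lemma chart_half_space_compose_linear:
  fixes g :: "real^'d \<Rightarrow> real^'m" and T S :: "real^'d \<Rightarrow> real^'d"
  assumes "chart M U g" and half: "g ` (U \<inter> {x. 0 \<le> x $ k}) = g ` U \<inter> A"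
    and "linear T" and TS: "\<And>x. T (S x) = x"
  obtains a where "a \<noteq> 0" "\<forall>u\<in>T -` U. g (T u) \<in> A \<longleftrightarrow> 0 \<le> a \<bullet> u"
proof
  define a where "a = matrix T $ k"
  have Ta: "T u $ k = a \<bullet> u" for u
  proof -
    have "T u = matrix T *v u" using matrix_works[of T u] \<open>linear T\<close> by (simp add: linear_matrix_vector_mul_eq)
    then show ?thesis by (simp add: a_def matrix_vector_mul_component)
  qed
  show "a \<noteq> 0" using Ta[of "S (axis k 1)"] TS by auto
  show "\<forall>u\<in>T -` U. g (T u) \<in> A \<longleftrightarrow> 0 \<le> a \<bullet> u"
  proof
    fix u assume "u \<in> T -` U"
    then have "g (T u) \<in> A \<longleftrightarrow> g (T u) \<in> g ` (U \<inter> {x. 0 \<le> x $ k})" using half by auto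
    also have "\<dots> \<longleftrightarrow> 0 \<le> T u $ k"
      using \<open>chart M U g\<close> \<open>u \<in> T -` U\<close> unfolding chart_def inj_on_def by auto
    finally show "g (T u) \<in> A \<longleftrightarrow> 0 \<le> a \<bullet> u" by (simp add: Ta)
  qed
qed

lemma boundary_chart_isometric_at_0:
  fixes x0 :: "real^'m"
  assumes "compact_C2_submanifold_with_boundary M TYPE('d) A" and "x0 \<in> man_boundary M A"
  obtains U :: "(real^'d) set" and g :: "real^'d \<Rightarrow> real^'m"
    and G' :: "real^'d \<Rightarrow> ((real^'d) \<Rightarrow>\<^sub>L (real^'m))" and a :: "real^'d"
  where "chart M U g" "0 \<in> U" "g 0 = x0"
    "\<forall>x\<in>U. (g has_derivative blinfun_apply (G' x)) (at x)" "isCont G' 0"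
    "\<forall>h. norm (G' 0 h) = norm h" "a \<noteq> 0" "\<forall>u\<in>U. g u \<in> A \<longleftrightarrow> 0 \<le> a \<bullet> u"
proof -
  obtain U0 :: "(real^'d) set" and g0 k where ch0: "chart M U0 g0" and "0 \<in> U0" "g0 0 = x0"
    and half: "g0 ` (U0 \<inter> {x. 0 \<le> x $ k}) = g0 ` U0 \<inter> A"
    using assms unfolding compact_C2_submanifold_with_boundary_def by blast
  have "C2_on g0 U0" and inj_deriv0: "\<forall>x\<in>U0. \<forall>g'. (g0 has_derivative g') (at x) \<longrightarrow> inj g'"
    using ch0 by (simp_all add: chart_def)
  obtain G0' :: "real^'d \<Rightarrow> ((real^'d) \<Rightarrow>\<^sub>L (real^'m))"
    where dG0: "\<forall>x\<in>U0. (g0 has_derivative blinfun_apply (G0' x)) (at x)" and "\<forall>x\<in>U0. isCont G0' x"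
    using \<open>C2_on g0 U0\<close> by (rule C2_on_continuous_derivative)
  have "inj (blinfun_apply (G0' 0))" using inj_deriv0 dG0 \<open>0 \<in> U0\<close> by blast
  moreover have "linear (blinfun_apply (G0' 0))"
    by (simp add: blinfun.bounded_linear_right bounded_linear.linear)
  ultimately obtain T S :: "real^'d \<Rightarrow> real^'d"
    where "linear T" "linear S" "\<And>x. S (T x) = x" "\<And>x. T (S x) = x"
      and iso: "\<And>h. norm (G0' 0 (T h)) = norm h"
    using linear_injective_isometric_reparametrization by blast
  define U where "U = T -` U0"
  define g where "g = g0 \<circ> T"
  have ch: "chart M U g"
    unfolding U_def g_def by (rule chart_compose_linear_iso) fact+
  obtain a where "a \<noteq> 0" and "\<forall>u\<in>U. g u \<in> A \<longleftrightarrow> 0 \<le> a \<bullet> u"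
    using chart_half_space_compose_linear[OF ch0 half \<open>linear T\<close> \<open>\<And>x. T (S x) = x\<close>]
    unfolding U_def g_def by auto
  have "T 0 = 0" using \<open>linear T\<close> by (rule linear_0)
  then have "0 \<in> U" "g 0 = x0" using \<open>0 \<in> U0\<close> \<open>g0 0 = x0\<close> by (auto simp: U_def g_def)
  have "C2_on g U" using ch by (simp add: chart_def)
  then obtain G' :: "real^'d \<Rightarrow> ((real^'d) \<Rightarrow>\<^sub>L (real^'m))"
    where dG: "\<forall>x\<in>U. (g has_derivative blinfun_apply (G' x)) (at x)" and cG: "\<forall>x\<in>U. isCont G' x"
    by (rule C2_on_continuous_derivative)
  have "(g has_derivative blinfun_apply (G0' 0) \<circ> T) (at 0)"
    unfolding g_def using dG0 \<open>0 \<in> U0\<close> \<open>T 0 = 0\<close>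
    by (intro diff_chain_at linear_imp_has_derivative \<open>linear T\<close>) auto
  then have "blinfun_apply (G' 0) = blinfun_apply (G0' 0) \<circ> T"
    using dG \<open>0 \<in> U\<close> has_derivative_unique by blast
  then have "\<forall>h. norm (G' 0 h) = norm h" using iso by simp
  then show ?thesis
    using that ch \<open>0 \<in> U\<close> \<open>g 0 = x0\<close> dG cG \<open>a \<noteq> 0\<close> \<open>\<forall>u\<in>U. g u \<in> A \<longleftrightarrow> 0 \<le> a \<bullet> u\<close> by blast
qed

lemma chart_image_covers_neighbourhood:
  assumes "chart M U g" and "u0 \<in> U" and "0 < \<rho>"
  obtains \<epsilon> where "0 < \<epsilon>" "\<And>z. z \<in> M \<Longrightarrow> dist z (g u0) < \<epsilon> \<Longrightarrow> z \<in> g ` (U \<inter> ball u0 \<rho>)"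
proof -
  from assms(1) obtain W where "open W" and gU: "g ` U = M \<inter> W"
    unfolding chart_def openin_open by blast
  then obtain \<epsilon>1 where "0 < \<epsilon>1" "ball (g u0) \<epsilon>1 \<subseteq> W"
    using assms(2) open_contains_ball by blast
  have "continuous_on (g ` U) (inv_into U g)" and "g u0 \<in> g ` U"
    using assms(1,2) by (auto simp: chart_def)
  then obtain \<delta> where "0 < \<delta>"
    and "\<forall>z\<in>g ` U. dist z (g u0) < \<delta> \<longrightarrow> dist (inv_into U g z) (inv_into U g (g u0)) < \<rho>"
    using assms(3) unfolding continuous_on_iff by blast
  moreover have "inv_into U g (g u0) = u0"
    using assms(1,2) unfolding chart_def by (simp add: inv_into_f_eq)
  ultimately have \<delta>: "\<forall>z\<in>g ` U. dist z (g u0) < \<delta> \<longrightarrow> dist (inv_into U g z) u0 < \<rho>"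
    by simp
  show ?thesis
  proof
    show "0 < min \<epsilon>1 \<delta>" using \<open>0 < \<epsilon>1\<close> \<open>0 < \<delta>\<close> by simp
    fix z assume "z \<in> M" and z: "dist z (g u0) < min \<epsilon>1 \<delta>"
    then have "z \<in> g ` U" using gU \<open>ball (g u0) \<epsilon>1 \<subseteq> W\<close> by (auto simp: dist_commute)
    moreover have "dist (inv_into U g z) u0 < \<rho>" using bspec[OF \<delta> \<open>z \<in> g ` U\<close>] z by simp
    ultimately have "inv_into U g z \<in> U \<inter> ball u0 \<rho>" and "z = g (inv_into U g z)"
      by (auto simp: inv_into_into f_inv_into_f dist_commute)
    then show "z \<in> g ` (U \<inter> ball u0 \<rho>)" by blast
  qed
qed

lemma dist_ge_of_derivative_near_isometry:
  fixes g :: "'a::real_normed_vector \<Rightarrow> 'b::real_normed_vector" and L :: "'a \<Rightarrow>\<^sub>L 'b"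
  assumes "convex S" and "\<forall>z\<in>S. (g has_derivative blinfun_apply (G' z)) (at z)"
    and "\<forall>z\<in>S. norm (G' z - L) \<le> \<eta>" and "\<forall>h. norm (L h) = norm h" and "u \<in> S" "w \<in> S"
  shows "(1 - \<eta>) * norm (u - w) \<le> dist (g u) (g w)"
proof -
  have deriv: "((\<lambda>x. g x - L x) has_derivative blinfun_apply (G' z - L)) (at z within S)"
    if "z \<in> S" for z
  proof -
    have "((\<lambda>x. g x - L x) has_derivative (\<lambda>h. G' z h - L h)) (at z)"
      using assms(2) that
      by (intro has_derivative_diff bounded_linear_imp_has_derivative blinfun.bounded_linear_right) auto
    moreover have "blinfun_apply (G' z - L) = (\<lambda>h. G' z h - L h)"
      by (simp add: fun_eq_iff blinfun.diff_left)
    ultimately show ?thesis by (simp add: has_derivative_at_withinI)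
  qed
  have bound: "onorm (blinfun_apply (G' z - L)) \<le> \<eta>" if "z \<in> S" for z
    using assms(3) that by (simp add: norm_blinfun.rep_eq)
  have "norm ((g u - L u) - (g w - L w)) \<le> \<eta> * norm (u - w)"
    by (rule differentiable_bound[OF assms(1) deriv bound assms(5,6)])
  moreover have "L (u - w) = (g u - g w) - ((g u - L u) - (g w - L w))"
    by (simp add: blinfun.diff_right)
  then have "norm (u - w) \<le> norm (g u - g w) + norm ((g u - L u) - (g w - L w))"
    using assms(4) norm_triangle_ineq4 by metis
  ultimately show ?thesis by (simp add: dist_norm left_diff_distrib)
qed

lemma derivative_local_distortion:
  fixes g :: "real^'d \<Rightarrow> real^'m" and G' :: "real^'d \<Rightarrow> ((real^'d) \<Rightarrow>\<^sub>L (real^'m))"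
  assumes "open U" "u0 \<in> U" "\<forall>x\<in>U. (g has_derivative blinfun_apply (G' x)) (at x)"
    and "isCont G' u0" and "\<forall>h. norm (G' u0 h) = norm h" and "1 < c"
  obtains \<rho> where "0 < \<rho>" "ball u0 \<rho> \<subseteq> U"
    "\<forall>u\<in>ball u0 \<rho>. \<forall>w\<in>ball u0 \<rho>. norm (u - w) \<le> c * dist (g u) (g w)"
    "\<forall>z\<in>ball u0 \<rho>. gram_jacobian (G' z) \<le> c ^ CARD('d)"
proof -
  obtain \<rho>1 where "0 < \<rho>1" "ball u0 \<rho>1 \<subseteq> U" using assms(1,2) open_contains_ball by blast
  have "0 < 1 - 1 / c" using assms(6) by simp
  then obtain \<rho>2 where "0 < \<rho>2" and \<rho>2: "\<forall>z. dist z u0 < \<rho>2 \<longrightarrow> dist (G' z) (G' u0) < 1 - 1 / c"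
    using assms(4) unfolding continuous_at_eps_delta by blast
  have "0 < c ^ CARD('d) - 1" using assms(6) by simp
  then obtain \<rho>3 where "0 < \<rho>3" and
    "\<forall>z. dist z u0 < \<rho>3 \<longrightarrow> dist (gram_jacobian (G' z)) (gram_jacobian (G' u0)) < c ^ CARD('d) - 1"
    using isCont_gram_jacobian[OF assms(4)] unfolding continuous_at_eps_delta by blast
  moreover have "gram_jacobian (G' u0) = 1"
    using assms(5) by (intro gram_jacobian_isometry) (simp_all add: blinfun.bounded_linear_right bounded_linear.linear)
  ultimately have \<rho>3: "\<forall>z. dist z u0 < \<rho>3 \<longrightarrow> dist (gram_jacobian (G' z)) 1 < c ^ CARD('d) - 1"
    by simp
  define \<rho> where "\<rho> = min \<rho>1 (min \<rho>2 \<rho>3)"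
  have "0 < \<rho>" using \<open>0 < \<rho>1\<close> \<open>0 < \<rho>2\<close> \<open>0 < \<rho>3\<close> by (simp add: \<rho>_def)
  moreover have "ball u0 \<rho> \<subseteq> U" using \<open>ball u0 \<rho>1 \<subseteq> U\<close> by (auto simp: \<rho>_def)
  moreover have "norm (u - w) \<le> c * dist (g u) (g w)" if "u \<in> ball u0 \<rho>" "w \<in> ball u0 \<rho>" for u w
  proof -
    have "(1 - (1 - 1 / c)) * norm (u - w) \<le> dist (g u) (g w)"
    proof (rule dist_ge_of_derivative_near_isometry[where L="G' u0"])
      show "\<forall>z\<in>ball u0 \<rho>. (g has_derivative blinfun_apply (G' z)) (at z)"
        using assms(3) \<open>ball u0 \<rho> \<subseteq> U\<close> by blast
      show "\<forall>z\<in>ball u0 \<rho>. norm (G' z - G' u0) \<le> 1 - 1 / c"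
        using \<rho>2 by (simp add: \<rho>_def dist_norm norm_minus_commute less_imp_le)
    qed (use assms(5) that in auto)
    then show ?thesis using assms(6) by (simp add: field_simps)
  qed
  moreover have "gram_jacobian (G' z) \<le> c ^ CARD('d)" if "z \<in> ball u0 \<rho>" for z
    using spec[OF \<rho>3, of z] that by (auto simp: \<rho>_def dist_real_def dist_commute)
  ultimately show ?thesis using that by blast
qed

lemma boundary_chart_with_small_distortion:
  fixes x0 :: "real^'m"
  assumes A: "compact_C2_submanifold_with_boundary M TYPE('d) A" and "x0 \<in> man_boundary M A"
    and "1 < c"
  obtains U :: "(real^'d) set" and g :: "real^'d \<Rightarrow> real^'m"
    and G' :: "real^'d \<Rightarrow> ((real^'d) \<Rightarrow>\<^sub>L (real^'m))" and a :: "real^'d" and \<rho> \<epsilon> :: real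
  where "chart M U g" "\<forall>x\<in>U. (g has_derivative blinfun_apply (G' x)) (at x)" "g 0 = x0" "a \<noteq> 0"
    "0 < \<rho>" "ball 0 \<rho> \<subseteq> U" "\<forall>u\<in>ball 0 \<rho>. g u \<in> A \<longleftrightarrow> 0 \<le> a \<bullet> u"
    "\<forall>u\<in>ball 0 \<rho>. \<forall>w\<in>ball 0 \<rho>. norm (u - w) \<le> c * dist (g u) (g w)"
    "\<forall>z\<in>ball 0 \<rho>. gram_jacobian (G' z) \<le> c ^ CARD('d)"
    "0 < \<epsilon>" "\<forall>z\<in>M. dist z x0 < \<epsilon> \<longrightarrow> z \<in> g ` ball 0 \<rho>"
proof -
  obtain U :: "(real^'d) set" and g :: "real^'d \<Rightarrow> real^'m"
    and G' :: "real^'d \<Rightarrow> ((real^'d) \<Rightarrow>\<^sub>L (real^'m))" and a :: "real^'d"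
    where ch: "chart M U g" and "0 \<in> U" "g 0 = x0"
      and dG: "\<forall>x\<in>U. (g has_derivative blinfun_apply (G' x)) (at x)" and "isCont G' 0"
      and "\<forall>h. norm (G' 0 h) = norm h" and "a \<noteq> 0" and half: "\<forall>u\<in>U. g u \<in> A \<longleftrightarrow> 0 \<le> a \<bullet> u"
    by (rule boundary_chart_isometric_at_0[OF assms(1,2)])
  have "open U" using ch by (simp add: chart_def)
  obtain \<rho> where "0 < \<rho>" and "ball 0 \<rho> \<subseteq> U"
    and lip: "\<forall>u\<in>ball 0 \<rho>. \<forall>w\<in>ball 0 \<rho>. norm (u - w) \<le> c * dist (g u) (g w)"
    and jac: "\<forall>z\<in>ball 0 \<rho>. gram_jacobian (G' z) \<le> c ^ CARD('d)"
    by (rule derivative_local_distortion[OF \<open>open U\<close> \<open>0 \<in> U\<close> dG \<open>isCont G' 0\<close>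
          \<open>\<forall>h. norm (G' 0 h) = norm h\<close> \<open>1 < c\<close>])
  obtain \<epsilon> where "0 < \<epsilon>" and "\<And>z. z \<in> M \<Longrightarrow> dist z x0 < \<epsilon> \<Longrightarrow> z \<in> g ` (U \<inter> ball 0 \<rho>)"
    using chart_image_covers_neighbourhood[OF ch \<open>0 \<in> U\<close> \<open>0 < \<rho>\<close>] \<open>g 0 = x0\<close> by blast
  then have cover: "\<forall>z\<in>M. dist z x0 < \<epsilon> \<longrightarrow> z \<in> g ` ball 0 \<rho>" by blast
  have "\<forall>u\<in>ball 0 \<rho>. g u \<in> A \<longleftrightarrow> 0 \<le> a \<bullet> u" using half \<open>ball 0 \<rho> \<subseteq> U\<close> by blast
  then show ?thesis
    by (rule that[OF ch dG \<open>g 0 = x0\<close> \<open>a \<noteq> 0\<close> \<open>0 < \<rho>\<close> \<open>ball 0 \<rho> \<subseteq> U\<close> _ lip jac \<open>0 < \<epsilon>\<close> cover])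
qed

section \<open>Packing a grid on the boundary hyperplane\<close>

lemma mu_gball_le_half_ball_volume:
  fixes g :: "real^'d \<Rightarrow> real^'m" and G' :: "real^'d \<Rightarrow> ((real^'d) \<Rightarrow>\<^sub>L (real^'m))"
  assumes vol: "riemannian_volume M TYPE('d) v" and ch: "chart M U g"
    and dG: "\<forall>x\<in>U. (g has_derivative blinfun_apply (G' x)) (at x)"
    and "V \<subseteq> U" and "cball w (c * r) \<subseteq> V" and "0 \<le> c" "0 \<le> r" and "a \<noteq> 0" "a \<bullet> w = 0"
    and half: "\<forall>u\<in>V. g u \<in> A \<longrightarrow> 0 \<le> a \<bullet> u"
    and lip: "\<forall>u\<in>V. norm (u - w) \<le> c * dist (g u) (g w)"
    and jac: "\<forall>z\<in>V. gram_jacobian (G' z) \<le> J" and "0 \<le> J"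
    and cover: "gball M (g w) r \<inter> A \<subseteq> g ` V"
    and "0 \<le> \<alpha>" and dens: "\<forall>y\<in>gball M (g w) r \<inter> A. f y \<le> \<alpha>" and f_out: "\<forall>y. y \<notin> A \<longrightarrow> f y = 0"
  shows "mu v f (gball M (g w) r) \<le> ennreal (\<alpha> * J * (unit_ball_vol CARD('d) * (c * r) ^ CARD('d) / 2))"
proof -
  define E where "E = cball w (c * r) \<inter> {u. 0 \<le> a \<bullet> u}"
  have "E \<subseteq> V" using \<open>cball w (c * r) \<subseteq> V\<close> by (auto simp: E_def)
  have "compact E" unfolding E_def by (intro compact_Int_closed compact_cball closed_halfspace_ge)
  then have E_meas: "E \<in> sets lborel" by (simp add: borel_compact)
  have "continuous_on U g"
    using dG by (auto intro!: continuous_at_imp_continuous_on has_derivative_continuous)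
  then have "compact (g ` E)"
    using \<open>compact E\<close> \<open>E \<subseteq> V\<close> \<open>V \<subseteq> U\<close> by (intro compact_continuous_image) (auto intro: continuous_on_subset)
  then have gE_meas: "g ` E \<in> sets v"
    using vol by (simp add: riemannian_volume_def borel_compact)
  have "gball M (g w) r \<inter> A \<subseteq> g ` E"
  proof
    fix y assume y: "y \<in> gball M (g w) r \<inter> A"
    then obtain u where "u \<in> V" and y_eq: "y = g u" using cover by blast
    have "y \<in> cball (g w) r" using y gball_subset_cball[OF \<open>0 \<le> r\<close>, of M "g w"] by blast
    then have "dist (g u) (g w) \<le> r" using y_eq by (simp add: dist_commute)
    have "norm (u - w) \<le> c * dist (g u) (g w)" using lip \<open>u \<in> V\<close> by blast
    also have "\<dots> \<le> c * r" using \<open>dist (g u) (g w) \<le> r\<close> \<open>0 \<le> c\<close> by (rule mult_left_mono)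
    finally have "dist w u \<le> c * r" by (simp add: dist_norm norm_minus_commute)
    moreover have "0 \<le> a \<bullet> u" using half \<open>u \<in> V\<close> y y_eq by blast
    ultimately show "y \<in> g ` E" using y_eq by (simp add: E_def)
  qed
  then have "mu v f (gball M (g w) r) \<le> ennreal \<alpha> * emeasure v (g ` E)"
    using gE_meas dens f_out by (rule mu_le_cmult_emeasure)
  also have "\<dots> \<le> ennreal \<alpha> * (ennreal J * emeasure lborel E)"
    using \<open>E \<subseteq> V\<close> \<open>V \<subseteq> U\<close> jac
    by (intro mult_left_mono[OF emeasure_chart_image_le[OF vol ch dG E_meas]]) auto
  also have "emeasure lborel E = ennreal (unit_ball_vol CARD('d) * (c * r) ^ CARD('d) / 2)"
    unfolding E_def using emeasure_half_cball[OF \<open>a \<noteq> 0\<close> \<open>a \<bullet> w = 0\<close>, of "c * r"] \<open>0 \<le> c\<close> \<open>0 \<le> r\<close>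
    by simp
  also have "ennreal \<alpha> * (ennreal J * ennreal (unit_ball_vol CARD('d) * (c * r) ^ CARD('d) / 2)) =
      ennreal (\<alpha> * J * (unit_ball_vol CARD('d) * (c * r) ^ CARD('d) / 2))"
  proof -
    have X: "0 \<le> unit_ball_vol CARD('d) * (c * r) ^ CARD('d) / 2" using \<open>0 \<le> c\<close> \<open>0 \<le> r\<close> by simp
    show ?thesis
      by (simp only: mult.assoc ennreal_mult[OF \<open>0 \<le> J\<close> X]
          ennreal_mult[OF \<open>0 \<le> \<alpha>\<close> mult_nonneg_nonneg[OF \<open>0 \<le> J\<close> X]])
  qed
  finally show ?thesis .
qed

lemma separated_grid_in_hyperplane:
  fixes a :: "real^'d"
  assumes "a \<noteq> 0" and "0 < h"
  obtains W where "finite W" "card W = N ^ (CARD('d) - 1)" "W \<subseteq> {u. a \<bullet> u = 0}"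
    "\<forall>w\<in>W. norm w \<le> real CARD('d) * real N * h" "\<forall>w\<in>W. \<forall>w'\<in>W. w \<noteq> w' \<longrightarrow> h \<le> dist w w'"
proof -
  obtain k :: 'd where True by simp
  define H where "H = {x :: real^'d. axis k 1 \<bullet> x = 0}"
  define P where "P = (\<Pi>\<^sub>E i \<in> UNIV - {k}. {..<N})"
  define grid :: "('d \<Rightarrow> nat) \<Rightarrow> real^'d"
    where "grid n = (\<chi> i. if i = k then 0 else real (n i) * h)" for n
  have grid_H: "grid n \<in> H" for n by (simp add: H_def grid_def inner_axis')
  have grid_norm: "norm (grid n) \<le> real CARD('d) * real N * h" if "n \<in> P" for n
  proof -
    have "\<bar>grid n $ i\<bar> \<le> real N * h" for i
    proof (cases "i = k")
      case False
      then have "n i < N" using PiE_mem[OF that[unfolded P_def], of i] by simp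
      then show ?thesis using False \<open>0 < h\<close> by (simp add: grid_def)
    qed (use \<open>0 < h\<close> in \<open>simp add: grid_def\<close>)
    then have "(\<Sum>i\<in>UNIV. \<bar>grid n $ i\<bar>) \<le> (\<Sum>i\<in>(UNIV::'d set). real N * h)" by (rule sum_mono)
    then show ?thesis using norm_le_l1_cart[of "grid n"] by (simp add: mult.assoc)
  qed
  have grid_sep: "h \<le> norm (grid n - grid n')" if n: "n \<in> P" and n': "n' \<in> P" and "n \<noteq> n'" for n n'
  proof -
    obtain i where "i \<noteq> k" "n i \<noteq> n' i"
      using PiE_ext[OF n[unfolded P_def] n'[unfolded P_def]] \<open>n \<noteq> n'\<close> by blast
    then have "1 * h \<le> \<bar>real (n i) - real (n' i)\<bar> * h"
      using \<open>0 < h\<close> by (intro mult_right_mono) auto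
    also have "\<dots> = \<bar>(grid n - grid n') $ i\<bar>"
      using \<open>i \<noteq> k\<close> \<open>0 < h\<close> by (simp add: grid_def flip: left_diff_distrib abs_mult_pos)
    also have "\<dots> \<le> norm (grid n - grid n')" by (rule component_le_norm_cart)
    finally show ?thesis by simp
  qed
  have "dim {x :: real^'d. axis k 1 \<bullet> x = 0} = dim {u. a \<bullet> u = 0}"
    using dim_hyperplane[OF \<open>a \<noteq> 0\<close>] dim_hyperplane[of "axis k (1::real)"] by simp
  then obtain f where "linear f" and f_H: "f ` H = {u. a \<bullet> u = 0}"
    and f_iso: "\<And>x. x \<in> H \<Longrightarrow> norm (f x) = norm x"
    unfolding H_def by (rule isometry_subspaces[OF subspace_hyperplane subspace_hyperplane]) blast
  have dist_f: "dist (f x) (f y) = norm (x - y)" if "x \<in> H" "y \<in> H" for x y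
  proof -
    have "x - y \<in> H" using that by (simp add: H_def inner_diff_right)
    then have "norm (f (x - y)) = norm (x - y)" by (rule f_iso)
    then show ?thesis using linear_diff[OF \<open>linear f\<close>, of x y] by (simp add: dist_norm)
  qed
  define W where "W = (f \<circ> grid) ` P"
  have "inj_on (f \<circ> grid) P"
  proof (rule inj_onI, rule ccontr)
    fix n n' assume "n \<in> P" "n' \<in> P" and eq: "(f \<circ> grid) n = (f \<circ> grid) n'" and "n \<noteq> n'"
    have "norm (grid n - grid n') = 0" using dist_f[OF grid_H grid_H, of n n'] eq by simp
    then show False using grid_sep[OF \<open>n \<in> P\<close> \<open>n' \<in> P\<close> \<open>n \<noteq> n'\<close>] \<open>0 < h\<close> by simp
  qed
  then have "card W = card P" unfolding W_def by (rule card_image)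
  also have "\<dots> = N ^ (CARD('d) - 1)" by (simp add: P_def card_PiE card_Diff_singleton)
  finally have "card W = N ^ (CARD('d) - 1)" .
  moreover have "W \<subseteq> {u. a \<bullet> u = 0}" using f_H grid_H unfolding W_def by auto
  moreover have "\<forall>w\<in>W. norm w \<le> real CARD('d) * real N * h"
    using grid_norm f_iso[OF grid_H] by (simp add: W_def)
  moreover have "\<forall>w\<in>W. \<forall>w'\<in>W. w \<noteq> w' \<longrightarrow> h \<le> dist w w'"
    using grid_sep dist_f[OF grid_H grid_H] by (auto simp: W_def)
  moreover have "finite W" by (simp add: W_def P_def finite_PiE)
  ultimately show ?thesis using that by blast
qed

lemma many_separated_points_in_hyperplane:
  fixes a :: "real^'d"
  assumes "a \<noteq> 0" and "0 < R" and "0 < s"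
  obtains K where "0 < K"
    "\<And>r. 0 < r \<Longrightarrow> r < K \<Longrightarrow> \<exists>W. finite W \<and> W \<subseteq> {u. a \<bullet> u = 0} \<inter> cball 0 R \<and>
        (\<forall>w\<in>W. \<forall>w'\<in>W. w \<noteq> w' \<longrightarrow> s * r \<le> dist w w') \<and>
        K ^ (CARD('d) - 1) \<le> r ^ (CARD('d) - 1) * real (card W)"
proof -
  define d where "d = real CARD('d)"
  have "0 < d" by (simp add: d_def)
  define K where "K = R / (2 * d * s)"
  have "0 < K" using assms \<open>0 < d\<close> by (simp add: K_def)
  moreover have "\<exists>W. finite W \<and> W \<subseteq> {u. a \<bullet> u = 0} \<inter> cball 0 R \<and>
        (\<forall>w\<in>W. \<forall>w'\<in>W. w \<noteq> w' \<longrightarrow> s * r \<le> dist w w') \<and>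
        K ^ (CARD('d) - 1) \<le> r ^ (CARD('d) - 1) * real (card W)" if "0 < r" "r < K" for r
  proof -
    define x where "x = R / (d * s * r)"
    have "2 < x"
      using that \<open>0 < d\<close> \<open>0 < s\<close> by (simp add: x_def K_def field_simps)
    define N where "N = nat \<lfloor>x\<rfloor>"
    have "x / 2 \<le> real N" and "real N \<le> x"
      using \<open>2 < x\<close> by (simp_all add: N_def) linarith
    obtain W where "finite W" "card W = N ^ (CARD('d) - 1)" "W \<subseteq> {u. a \<bullet> u = 0}"
      and W_norm: "\<forall>w\<in>W. norm w \<le> d * real N * (s * r)"
      and W_sep: "\<forall>w\<in>W. \<forall>w'\<in>W. w \<noteq> w' \<longrightarrow> s * r \<le> dist w w'"
      using separated_grid_in_hyperplane[OF \<open>a \<noteq> 0\<close>, of "s * r" N] \<open>0 < s\<close> \<open>0 < r\<close>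
      unfolding d_def by auto
    have "d * real N * (s * r) \<le> d * x * (s * r)"
      using \<open>real N \<le> x\<close> \<open>0 < d\<close> \<open>0 < s\<close> \<open>0 < r\<close> by (intro mult_right_mono) auto
    also have "\<dots> = R" using \<open>0 < d\<close> \<open>0 < s\<close> \<open>0 < r\<close> by (simp add: x_def)
    finally have "W \<subseteq> cball 0 R" using W_norm by auto
    have "K = r * (x / 2)" using \<open>0 < d\<close> \<open>0 < s\<close> \<open>0 < r\<close> by (simp add: x_def K_def)
    also have "\<dots> \<le> r * real N" using \<open>x / 2 \<le> real N\<close> \<open>0 < r\<close> by simp
    finally have "K ^ (CARD('d) - 1) \<le> (r * real N) ^ (CARD('d) - 1)"
      using \<open>0 < K\<close> by (simp add: power_mono)
    also have "\<dots> = r ^ (CARD('d) - 1) * real (card W)"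
      using \<open>card W = N ^ (CARD('d) - 1)\<close> by (simp add: power_mult_distrib)
    finally show ?thesis
      using \<open>finite W\<close> \<open>W \<subseteq> {u. a \<bullet> u = 0}\<close> \<open>W \<subseteq> cball 0 R\<close> W_sep by blast
  qed
  ultimately show ?thesis using that by blast
qed

lemma packing_number_ge_card_flat_grid:
  fixes g :: "real^'d \<Rightarrow> real^'m" and G' :: "real^'d \<Rightarrow> ((real^'d) \<Rightarrow>\<^sub>L (real^'m))"
  assumes vol: "riemannian_volume M TYPE('d) v" and ch: "chart M U g"
    and dG: "\<forall>x\<in>U. (g has_derivative blinfun_apply (G' x)) (at x)"
    and "ball 0 \<rho> \<subseteq> U" and "0 < c" and "a \<noteq> 0"
    and half: "\<forall>u\<in>ball 0 \<rho>. g u \<in> A \<longleftrightarrow> 0 \<le> a \<bullet> u"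
    and lip: "\<forall>u\<in>ball 0 \<rho>. \<forall>w\<in>ball 0 \<rho>. norm (u - w) \<le> c * dist (g u) (g w)"
    and jac: "\<forall>z\<in>ball 0 \<rho>. gram_jacobian (G' z) \<le> c ^ CARD('d)"
    and cover: "\<forall>z\<in>M. dist z x0 < \<epsilon> \<longrightarrow> z \<in> g ` ball 0 \<rho>"
    and near: "\<forall>z\<in>A. dist z x0 < \<epsilon> \<longrightarrow> z \<in> B \<and> f z \<le> \<alpha>'" and "0 \<le> \<alpha>'"
    and f_out: "\<forall>y. y \<notin> A \<longrightarrow> f y = 0"
    and "finite W" and W_sub: "W \<subseteq> {u. a \<bullet> u = 0}"
    and W_near: "\<forall>w\<in>W. norm w \<le> \<rho> / 2 \<and> dist (g w) x0 < \<epsilon> / 2"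
    and W_sep: "\<forall>w\<in>W. \<forall>w'\<in>W. w \<noteq> w' \<longrightarrow> 3 * c * r \<le> dist w w'"
    and "0 < r" "r < \<epsilon> / 2" "c * r < \<rho> / 2"
  shows "enat (card W) \<le> packing_number M v f B r
           (\<alpha>' * c ^ CARD('d) * (unit_ball_vol CARD('d) * (c * r) ^ CARD('d) / 2))"
proof (rule packing_number_ge_separated_image[OF \<open>finite W\<close>])
  have "0 \<le> c * r" using \<open>0 < c\<close> \<open>0 < r\<close> by simp
  have W_ball: "w \<in> ball 0 \<rho>" if "w \<in> W" for w
    using W_near that \<open>c * r < \<rho> / 2\<close> \<open>0 \<le> c * r\<close> by fastforce
  have W_dist: "dist (g w) x0 < \<epsilon>" if "w \<in> W" for w
    using W_near that \<open>0 < r\<close> \<open>r < \<epsilon> / 2\<close> by fastforce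
  show "\<forall>w\<in>W. g w \<in> B"
  proof
    fix w assume "w \<in> W"
    then have "g w \<in> A" using half W_ball W_sub by auto
    then show "g w \<in> B" using near W_dist \<open>w \<in> W\<close> by blast
  qed
  show "\<forall>w\<in>W. \<forall>w'\<in>W. w \<noteq> w' \<longrightarrow> 2 * r < dist (g w) (g w')"
  proof (intro ballI impI)
    fix w w' assume "w \<in> W" "w' \<in> W" "w \<noteq> w'"
    then have "3 * c * r \<le> dist w w'" using W_sep by blast
    also have "\<dots> \<le> c * dist (g w) (g w')"
      using lip W_ball[OF \<open>w \<in> W\<close>] W_ball[OF \<open>w' \<in> W\<close>] by (simp add: dist_norm)
    finally have "c * (3 * r) \<le> c * dist (g w) (g w')" by (simp add: mult.left_commute)
    then have "3 * r \<le> dist (g w) (g w')" using \<open>0 < c\<close> by simp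
    then show "2 * r < dist (g w) (g w')" using \<open>0 < r\<close> by simp
  qed
  show "\<forall>w\<in>W. mu v f (gball M (g w) r)
          \<le> ennreal (\<alpha>' * c ^ CARD('d) * (unit_ball_vol CARD('d) * (c * r) ^ CARD('d) / 2))"
  proof
    fix w assume "w \<in> W"
    have gball_near: "y \<in> M \<and> dist y x0 < \<epsilon>" if "y \<in> gball M (g w) r" for y
    proof -
      have "y \<in> M" "dist (g w) y \<le> r" using that gball_subset_cball[of r M "g w"] \<open>0 < r\<close> by auto
      then show ?thesis
        using W_near \<open>w \<in> W\<close> \<open>r < \<epsilon> / 2\<close> dist_triangle3[of y x0 "g w"] by auto
    qed
    have "cball w (c * r) \<subseteq> ball 0 \<rho>"
    proof
      fix u assume "u \<in> cball w (c * r)"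
      then have "norm u \<le> norm w + c * r" using norm_triangle_sub[of u w] by (simp add: dist_norm norm_minus_commute)
      then show "u \<in> ball 0 \<rho>" using W_near \<open>w \<in> W\<close> \<open>c * r < \<rho> / 2\<close> by auto
    qed
    moreover have "a \<bullet> w = 0" using W_sub \<open>w \<in> W\<close> by blast
    moreover have "\<forall>u\<in>ball 0 \<rho>. g u \<in> A \<longrightarrow> 0 \<le> a \<bullet> u" using half by blast
    moreover have "\<forall>u\<in>ball 0 \<rho>. norm (u - w) \<le> c * dist (g u) (g w)"
      using lip W_ball[OF \<open>w \<in> W\<close>] by blast
    moreover have "gball M (g w) r \<inter> A \<subseteq> g ` ball 0 \<rho>" using gball_near cover by blast
    moreover have "\<forall>y\<in>gball M (g w) r \<inter> A. f y \<le> \<alpha>'" using gball_near near by blast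
    ultimately show "mu v f (gball M (g w) r)
          \<le> ennreal (\<alpha>' * c ^ CARD('d) * (unit_ball_vol CARD('d) * (c * r) ^ CARD('d) / 2))"
      using \<open>0 < c\<close> \<open>0 < r\<close> \<open>a \<noteq> 0\<close> jac \<open>0 \<le> \<alpha>'\<close> f_out
      by (intro mu_gball_le_half_ball_volume[OF vol ch dG \<open>ball 0 \<rho> \<subseteq> U\<close>]) auto
  qed
qed (use \<open>0 < r\<close> in simp)

lemma exists_power_eq_ratio:
  fixes \<alpha> \<beta> :: real
  assumes "0 < \<beta>" and "\<beta> < \<alpha>" and "0 < n"
  obtains c where "1 < c" "\<beta> * c ^ n = \<alpha>"
proof
  define c where "c = (\<alpha> / \<beta>) powr (1 / n)"
  have "1 < \<alpha> / \<beta>" using assms by simp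
  then show "1 < c" using \<open>0 < n\<close> unfolding c_def by (intro gr_one_powr) auto
  have "c ^ n = (\<alpha> / \<beta>) powr (1 / n * n)"
    using \<open>1 < c\<close> \<open>0 < n\<close> assms by (simp add: c_def powr_powr flip: powr_realpow)
  also have "\<dots> = \<alpha> / \<beta>" using assms by simp
  finally show "\<beta> * c ^ n = \<alpha>" using \<open>0 < \<beta>\<close> by simp
qed

lemma ereal_le_mult_of_enat_le:
  fixes K x :: real
  assumes "K \<le> x * real n" and "enat n \<le> p" and "0 \<le> x"
  shows "ereal K \<le> ereal x * ereal_of_enat p"
proof -
  have "ereal (real n) \<le> ereal_of_enat p"
    using assms(2) by (metis ereal_of_enat_le_iff ereal_of_enat_simps(1))
  then have "ereal x * ereal (real n) \<le> ereal x * ereal_of_enat p"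
    using assms(3) by (intro ereal_mult_left_mono) auto
  moreover have "ereal K \<le> ereal x * ereal (real n)" using assms(1) by simp
  ultimately show ?thesis by (rule order_trans[rotated])
qed

lemma packing_number_lower_bound_near_boundary_point:
  fixes M A B :: "(real^'m) set" and f :: "real^'m \<Rightarrow> real"
  assumes vol: "riemannian_volume M TYPE('d::finite) v"
    and A: "compact_C2_submanifold_with_boundary M TYPE('d) A"
    and "x0 \<in> man_boundary M A" and "0 < \<alpha>'" and "\<alpha>' < \<alpha>" and "0 < \<epsilon>"
    and near: "\<forall>z\<in>A. dist z x0 < \<epsilon> \<longrightarrow> z \<in> B \<and> f z \<le> \<alpha>'" and f_out: "\<forall>y. y \<notin> A \<longrightarrow> f y = 0"
  shows "\<exists>K>0. \<forall>\<^sub>F r in at_right 0. ereal K \<le> ereal (r ^ (CARD('d) - 1)) *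
           ereal_of_enat (packing_number M v f B r (\<alpha> * theta CARD('d) * r ^ CARD('d) / 2))"
proof -
  \<comment> \<open>One factor c^d bounds the Jacobian, the other the volume of the enlarged preimage ball.\<close>
  obtain c where "1 < c" and "\<alpha>' * c ^ (2 * CARD('d)) = \<alpha>"
    using exists_power_eq_ratio[OF \<open>0 < \<alpha>'\<close> \<open>\<alpha>' < \<alpha>\<close>, of "2 * CARD('d)"] by auto
  then have c_pow: "\<alpha>' * c ^ CARD('d) * c ^ CARD('d) = \<alpha>" by (simp add: mult_2 power_add mult.assoc)
  obtain U :: "(real^'d) set" and g :: "real^'d \<Rightarrow> real^'m"
    and G' :: "real^'d \<Rightarrow> ((real^'d) \<Rightarrow>\<^sub>L (real^'m))" and a :: "real^'d" and \<rho> \<epsilon>1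
    where ch: "chart M U g" and dG: "\<forall>x\<in>U. (g has_derivative blinfun_apply (G' x)) (at x)"
      and "g 0 = x0" "a \<noteq> 0" "0 < \<rho>" "ball 0 \<rho> \<subseteq> U" and half: "\<forall>u\<in>ball 0 \<rho>. g u \<in> A \<longleftrightarrow> 0 \<le> a \<bullet> u"
      and lip: "\<forall>u\<in>ball 0 \<rho>. \<forall>w\<in>ball 0 \<rho>. norm (u - w) \<le> c * dist (g u) (g w)"
      and jac: "\<forall>z\<in>ball 0 \<rho>. gram_jacobian (G' z) \<le> c ^ CARD('d)"
      and "0 < \<epsilon>1" and cover: "\<forall>z\<in>M. dist z x0 < \<epsilon>1 \<longrightarrow> z \<in> g ` ball 0 \<rho>"
    by (rule boundary_chart_with_small_distortion[OF A \<open>x0 \<in> man_boundary M A\<close> \<open>1 < c\<close>])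
  define \<epsilon>2 where "\<epsilon>2 = min \<epsilon> \<epsilon>1"
  have "0 < \<epsilon>2" using \<open>0 < \<epsilon>\<close> \<open>0 < \<epsilon>1\<close> by (simp add: \<epsilon>2_def)
  have "0 \<in> U" using \<open>ball 0 \<rho> \<subseteq> U\<close> \<open>0 < \<rho>\<close> by auto
  then have "isCont g 0" using dG has_derivative_continuous by blast
  then obtain \<delta> where "0 < \<delta>" and \<delta>: "\<forall>w. dist w 0 < \<delta> \<longrightarrow> dist (g w) (g 0) < \<epsilon>2 / 2"
    using \<open>0 < \<epsilon>2\<close> unfolding continuous_at_eps_delta by (meson half_gt_zero)
  \<comment> \<open>Centres u with |u| \<le> R leave room for the preimage balls cball u (c r) inside ball 0 \<rho>,
    and their r-balls on M stay in the \<epsilon>2-neighbourhood of x0 covered by the chart.\<close>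
  define R where "R = min (\<delta> / 2) (\<rho> / 2)"
  have "0 < R" using \<open>0 < \<delta>\<close> \<open>0 < \<rho>\<close> by (simp add: R_def)
  obtain K where "0 < K" and K: "\<And>r. 0 < r \<Longrightarrow> r < K \<Longrightarrow> \<exists>W. finite W \<and> W \<subseteq> {u. a \<bullet> u = 0} \<inter> cball 0 R \<and>
        (\<forall>w\<in>W. \<forall>w'\<in>W. w \<noteq> w' \<longrightarrow> 3 * c * r \<le> dist w w') \<and>
        K ^ (CARD('d) - 1) \<le> r ^ (CARD('d) - 1) * real (card W)"
    using many_separated_points_in_hyperplane[OF \<open>a \<noteq> 0\<close> \<open>0 < R\<close>, of "3 * c"] \<open>1 < c\<close> by auto
  define r0 where "r0 = min K (min (\<epsilon>2 / 2) (\<rho> / (2 * c)))"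
  have "0 < r0" using \<open>0 < K\<close> \<open>0 < \<epsilon>2\<close> \<open>0 < \<rho>\<close> \<open>1 < c\<close> by (simp add: r0_def)
  have "ereal (K ^ (CARD('d) - 1)) \<le> ereal (r ^ (CARD('d) - 1)) *
          ereal_of_enat (packing_number M v f B r (\<alpha> * theta CARD('d) * r ^ CARD('d) / 2))"
    if "0 < r" "r < r0" for r
  proof -
    have "r < K" "r < \<epsilon>2 / 2" "c * r < \<rho> / 2"
      using that \<open>1 < c\<close> by (auto simp: r0_def field_simps)
    then obtain W where "finite W" and W_sub: "W \<subseteq> {u. a \<bullet> u = 0} \<inter> cball 0 R"
      and W_sep: "\<forall>w\<in>W. \<forall>w'\<in>W. w \<noteq> w' \<longrightarrow> 3 * c * r \<le> dist w w'"
      and W_card: "K ^ (CARD('d) - 1) \<le> r ^ (CARD('d) - 1) * real (card W)"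
      using K[OF \<open>0 < r\<close>] by blast
    have W_near: "\<forall>w\<in>W. norm w \<le> \<rho> / 2 \<and> dist (g w) x0 < \<epsilon>2 / 2"
      using W_sub \<delta> \<open>g 0 = x0\<close> \<open>0 < \<delta>\<close> by (force simp: R_def)
    have "unit_ball_vol (real CARD('d)) = theta CARD('d)"
      by (simp add: unit_ball_vol_def theta_def add.commute)
    then have "\<alpha>' * c ^ CARD('d) * (unit_ball_vol CARD('d) * (c * r) ^ CARD('d) / 2) =
        \<alpha> * theta CARD('d) * r ^ CARD('d) / 2"
      using c_pow by (simp add: power_mult_distrib algebra_simps)
    moreover have "enat (card W) \<le> packing_number M v f B r
        (\<alpha>' * c ^ CARD('d) * (unit_ball_vol CARD('d) * (c * r) ^ CARD('d) / 2))"
      using \<open>1 < c\<close> \<open>0 < \<alpha>'\<close> W_sub cover near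
      by (intro packing_number_ge_card_flat_grid[OF vol ch dG \<open>ball 0 \<rho> \<subseteq> U\<close> _ \<open>a \<noteq> 0\<close> half lip jac
            _ _ _ f_out \<open>finite W\<close> _ W_near W_sep \<open>0 < r\<close> \<open>r < \<epsilon>2 / 2\<close> \<open>c * r < \<rho> / 2\<close>])
         (auto simp: \<epsilon>2_def)
    ultimately have "enat (card W) \<le> packing_number M v f B r (\<alpha> * theta CARD('d) * r ^ CARD('d) / 2)"
      by simp
    then show ?thesis using W_card \<open>0 < r\<close> by (intro ereal_le_mult_of_enat_le) auto
  qed
  then show ?thesis
    using \<open>0 < K\<close> \<open>0 < r0\<close> by (intro exI[of _ "K ^ (CARD('d) - 1)"]) (auto simp: eventually_at_right_field)
qed

lemma boundary_point_with_low_density: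
  fixes f :: "'a::metric_space \<Rightarrow> real"
  assumes "B \<subseteq> A"
    and B_bd: "B \<inter> man_boundary M A = closure ((B - closure (A - B)) \<inter> man_boundary M A)"
    and "B \<inter> man_boundary M A \<noteq> {}" and "continuous_on A f" and "\<forall>x. 0 \<le> f x"
    and "Inf (f ` (B \<inter> man_boundary M A)) < \<alpha>"
  obtains x0 \<alpha>' \<epsilon> where "x0 \<in> man_boundary M A" "0 < \<alpha>'" "\<alpha>' < \<alpha>" "0 < \<epsilon>"
    "\<forall>z\<in>A. dist z x0 < \<epsilon> \<longrightarrow> z \<in> B \<and> f z \<le> \<alpha>'"
proof -
  have "bdd_below (f ` (B \<inter> man_boundary M A))" using assms(5) by (intro bdd_belowI[where m=0]) auto
  then obtain y where y: "y \<in> B \<inter> man_boundary M A" and "f y < \<alpha>"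
    using cInf_less_iff[of "f ` (B \<inter> man_boundary M A)" \<alpha>] assms(3,6) by auto
  have "y \<in> A" "0 < \<alpha> - f y" using y \<open>B \<subseteq> A\<close> \<open>f y < \<alpha>\<close> by auto
  then obtain \<delta> where "0 < \<delta>" and \<delta>: "\<forall>z\<in>A. dist z y < \<delta> \<longrightarrow> dist (f z) (f y) < \<alpha> - f y"
    using assms(4) unfolding continuous_on_iff by blast
  have "y \<in> closure ((B - closure (A - B)) \<inter> man_boundary M A)" using y B_bd by blast
  then have "\<exists>x0\<in>(B - closure (A - B)) \<inter> man_boundary M A. dist x0 y < \<delta>"
    using \<open>0 < \<delta>\<close> by (simp only: closure_approachable)
  then obtain x0 where x0: "x0 \<in> (B - closure (A - B)) \<inter> man_boundary M A" and "dist x0 y < \<delta>" ..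
  then have "x0 \<in> A" using \<open>B \<subseteq> A\<close> by blast
  then have "f x0 < \<alpha>" using \<delta> \<open>dist x0 y < \<delta>\<close> by (auto simp: dist_real_def)
  have "x0 \<notin> closure (A - B)" using x0 by blast
  then obtain \<epsilon>B where "0 < \<epsilon>B" and \<epsilon>B: "\<forall>z\<in>A - B. \<not> dist z x0 < \<epsilon>B"
    by (auto simp: closure_approachable)
  define \<alpha>' where "\<alpha>' = (f x0 + \<alpha>) / 2"
  have "0 < \<alpha>' - f x0" "\<alpha>' < \<alpha>" "0 < \<alpha>'" using \<open>f x0 < \<alpha>\<close> assms(5)[rule_format, of x0] by (auto simp: \<alpha>'_def)
  then obtain \<epsilon>f where "0 < \<epsilon>f" and \<epsilon>f: "\<forall>z\<in>A. dist z x0 < \<epsilon>f \<longrightarrow> dist (f z) (f x0) < \<alpha>' - f x0"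
    using assms(4) \<open>x0 \<in> A\<close> unfolding continuous_on_iff by blast
  have near: "\<forall>z\<in>A. dist z x0 < min \<epsilon>B \<epsilon>f \<longrightarrow> z \<in> B \<and> f z \<le> \<alpha>'"
  proof (intro ballI impI)
    fix z assume "z \<in> A" "dist z x0 < min \<epsilon>B \<epsilon>f"
    then have "z \<in> B" and "dist (f z) (f x0) < \<alpha>' - f x0" using \<epsilon>B \<epsilon>f by auto
    then show "z \<in> B \<and> f z \<le> \<alpha>'" by (simp add: dist_real_def)
  qed
  have "x0 \<in> man_boundary M A" "0 < min \<epsilon>B \<epsilon>f" using x0 \<open>0 < \<epsilon>B\<close> \<open>0 < \<epsilon>f\<close> by auto
  then show ?thesis using near \<open>0 < \<alpha>'\<close> \<open>\<alpha>' < \<alpha>\<close> by (intro that)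
qed

theorem lemma4p9:
  fixes M A B :: "(real^'m) set" and v :: "(real^'m) measure"
    and f :: "real^'m \<Rightarrow> real" and \<alpha> :: real
  assumes "2 \<le> CARD('d::finite)" and "CARD('d) \<le> CARD('m)"
    and "closed_C2_submanifold M TYPE('d)"
    and "riemannian_volume M TYPE('d) v"
    and "compact_C2_submanifold_with_boundary M TYPE('d) A"
    and "closed B" and "B \<subseteq> A"
    and "f \<in> borel_measurable borel" and "\<forall>x. 0 \<le> f x"
    and "(\<integral>\<^sup>+ x. ennreal (f x) \<partial>v) = 1"
    and "\<forall>x. x \<notin> A \<longrightarrow> f x = 0"
    and "B \<inter> man_boundary M A = closure ((B - closure (A - B)) \<inter> man_boundary M A)"
    and "B \<inter> man_boundary M A \<noteq> {}"
    and "continuous_on A f"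
    and "\<alpha> > Inf (f ` (B \<inter> man_boundary M A))"
  shows "Liminf (at_right 0) (\<lambda>r::real. ereal (r ^ (CARD('d) - 1)) *
           ereal_of_enat (packing_number M v f B r (\<alpha> * theta CARD('d) * r ^ CARD('d) / 2))) > 0"
proof -
  obtain x0 \<alpha>' \<epsilon> where "x0 \<in> man_boundary M A" "0 < \<alpha>'" "\<alpha>' < \<alpha>" "0 < \<epsilon>"
    and "\<forall>z\<in>A. dist z x0 < \<epsilon> \<longrightarrow> z \<in> B \<and> f z \<le> \<alpha>'"
    by (rule boundary_point_with_low_density[OF assms(7,12-14,9,15)])
  then obtain K where "0 < K" and ev: "\<forall>\<^sub>F r in at_right 0. ereal K \<le> ereal (r ^ (CARD('d) - 1)) *
      ereal_of_enat (packing_number M v f B r (\<alpha> * theta CARD('d) * r ^ CARD('d) / 2))"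
    using packing_number_lower_bound_near_boundary_point[OF assms(4,5)] assms(11) by blast
  have "(0::ereal) < ereal K" using \<open>0 < K\<close> by simp
  also have "\<dots> \<le> Liminf (at_right 0) (\<lambda>r::real. ereal (r ^ (CARD('d) - 1)) *
      ereal_of_enat (packing_number M v f B r (\<alpha> * theta CARD('d) * r ^ CARD('d) / 2)))"
    using ev by (rule Liminf_bounded)
  finally show ?thesis .
qed

end
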